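(* Let $\Phi\colon\mathcal{M}(2;\mathbb{C})\dashrightarrow\mathcal{M}(2;\mathbb{C})$ be a rational transformation compatible with conjugation. Then $\Phi$ is birational if and only if $\mathrm{Sq}\,\Phi$ is birational.
   Context: $\mathrm{Inv}\colon\mathcal{M}(2;\mathbb{C})\to\mathbb{C}^2$, $\mathrm{M}\mapsto(\mathrm{tr}\,\mathrm{M},\det\mathrm{M})$. $\Phi$ is compatible with conjugation if $\mathrm{A}\Phi(\mathrm{M})\mathrm{A}^{-1}=\Phi(\mathrm{A}\mathrm{M}\mathrm{A}^{-1})$ for all $\mathrm{A}\in\mathrm{GL}(2;\mathbb{C})$ whenever both sides are defined; for such $\Phi$ there is a rational map $\mathrm{Sq}\,\Phi\colon\mathbb{C}^2\dashrightarrow\mathbb{C}^2$ with $\mathrm{Inv}\circ\Phi=\mathrm{Sq}\,\Phi\circ\mathrm{Inv}$. *)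

theory Defs
  imports "HOL-Analysis.Analysis"
begin

text \<open>Polynomial functions on a space whose coordinate functions are given by a set C
  (for C^n: the projections; for 2x2 matrices: the four entries).\<close>
inductive polyfun :: "('a \<Rightarrow> complex) set \<Rightarrow> ('a \<Rightarrow> complex) \<Rightarrow> bool"
  for C :: "('a \<Rightarrow> complex) set" where
  coord: "c \<in> C \<Longrightarrow> polyfun C c"
| const: "polyfun C (\<lambda>x. a)"
| add: "polyfun C p \<Longrightarrow> polyfun C q \<Longrightarrow> polyfun C (\<lambda>x. p x + q x)"
| mult: "polyfun C p \<Longrightarrow> polyfun C q \<Longrightarrow> polyfun C (\<lambda>x. p x * q x)"

definition mat_coords :: "(complex^2^2 \<Rightarrow> complex) set" where
  "mat_coords = {(\<lambda>M. M $ i $ j) | i j. True}"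

definition vec_coords :: "(complex^2 \<Rightarrow> complex) set" where
  "vec_coords = {(\<lambda>v. v $ i) | i. True}"

text \<open>A property holds generically: on the complement of the zero set of a
  nonzero polynomial (a nonempty Zariski open set).\<close>
definition generically :: "('a \<Rightarrow> complex) set \<Rightarrow> ('a \<Rightarrow> bool) \<Rightarrow> bool" where
  "generically C P \<longleftrightarrow>
     (\<exists>r. polyfun C r \<and> (\<exists>x. r x \<noteq> 0) \<and> (\<forall>x. r x \<noteq> 0 \<longrightarrow> P x))"

text \<open>f is a rational map with common denominator q: q is a nonzero polynomial and on
  the set where q does not vanish every coordinate of f equals p/q for a polynomial p.
  Values of f where q vanishes are irrelevant.\<close>
definition rational_map ::
  "('a \<Rightarrow> complex) set \<Rightarrow> ('b \<Rightarrow> complex) set \<Rightarrow> ('a \<Rightarrow> 'b) \<Rightarrow> ('a \<Rightarrow> complex) \<Rightarrow> bool" where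
  "rational_map CX CY f q \<longleftrightarrow>
     polyfun CX q \<and> (\<exists>x. q x \<noteq> 0) \<and>
     (\<forall>c\<in>CY. \<exists>p. polyfun CX p \<and> (\<forall>x. q x \<noteq> 0 \<longrightarrow> c (f x) = p x / q x))"

definition birational ::
  "('a \<Rightarrow> complex) set \<Rightarrow> ('b \<Rightarrow> complex) set \<Rightarrow> ('a \<Rightarrow> 'b) \<Rightarrow> ('a \<Rightarrow> complex) \<Rightarrow> bool" where
  "birational CX CY f q \<longleftrightarrow>
     (\<exists>g qg. rational_map CY CX g qg \<and>
        generically CX (\<lambda>x. q x \<noteq> 0 \<and> qg (f x) \<noteq> 0 \<and> g (f x) = x) \<and>
        generically CY (\<lambda>y. qg y \<noteq> 0 \<and> q (g y) \<noteq> 0 \<and> f (g y) = y))"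

definition Inv :: "complex^2^2 \<Rightarrow> complex^2" where
  "Inv M = vector [trace M, det M]"

definition compatible_with_conjugation :: "(complex^2^2 \<Rightarrow> complex^2^2) \<Rightarrow> bool" where
  "compatible_with_conjugation \<Phi> \<longleftrightarrow>
     (\<forall>A :: complex^2^2. invertible A \<longrightarrow>
        generically mat_coords (\<lambda>M. A ** \<Phi> M ** matrix_inv A = \<Phi> (A ** M ** matrix_inv A)))"

end

theory Submission
  imports Defs "HOL-Computational_Algebra.Polynomial"
begin

text \<open>Compatibility with conjugation forces \<open>\<Phi> M = a(Inv M) \<one> + b(Inv M) M\<close> generically:
  conjugating by \<open>G + c \<one>\<close> shows that \<open>\<Phi> G\<close> commutes with \<open>G\<close>, hence lies in the pencil of the
  cyclic matrix \<open>G\<close>; the coefficients are rational functions of \<open>Inv G\<close>, read off along a section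
  of \<open>Inv\<close>, and propagate to the whole similarity class of \<open>G\<close>. Consequently \<open>Sq \<Phi>\<close> is
  \<open>y \<mapsto> (2a + b y\<^sub>1, a\<^sup>2 + a b y\<^sub>1 + b\<^sup>2 y\<^sub>2)\<close>.
  If \<open>\<Phi>\<close> has a rational inverse, that inverse is again compatible with conjugation, so it has the
  same shape and induces a rational inverse of \<open>Sq \<Phi>\<close>. Conversely, if \<open>T\<close> inverts \<open>Sq \<Phi>\<close>, then
  \<open>b\<close> does not vanish identically (otherwise \<open>Sq \<Phi>\<close> would land in the curve \<open>y\<^sub>1\<^sup>2 = 4 y\<^sub>2\<close>),
  and \<open>N \<mapsto> (N - a)/b\<close>, with \<open>a\<close>, \<open>b\<close> evaluated at \<open>T (Inv N)\<close>, inverts \<open>\<Phi>\<close>.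
  Identities between rational maps are transferred from a Zariski dense set to their whole domain
  by restricting to lines.\<close>

section \<open>Polynomial functions and generic properties\<close>

lemma polyfun_cmult: "polyfun C p \<Longrightarrow> polyfun C (\<lambda>x. c * p x)"
  by (rule polyfun.mult[OF polyfun.const])

lemma polyfun_uminus: "polyfun C p \<Longrightarrow> polyfun C (\<lambda>x. - p x)"
  using polyfun_cmult[of C p "-1"] by simp

lemma polyfun_diff: "polyfun C p \<Longrightarrow> polyfun C q \<Longrightarrow> polyfun C (\<lambda>x. p x - q x)"
  using polyfun.add[OF _ polyfun_uminus] by simp

lemma polyfun_power: "polyfun C p \<Longrightarrow> polyfun C (\<lambda>x. p x ^ n)"
  by (induction n) (auto intro: polyfun.const polyfun.mult)

text \<open>The only geometric property of \<open>\<complex>\<^sup>n\<close> that the identity principle below needs.\<close>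

definition affine_lines :: "('a \<Rightarrow> complex) set \<Rightarrow> bool" where
  "affine_lines C \<longleftrightarrow>
     (\<forall>x y. \<exists>L. L 0 = x \<and> L 1 = y \<and> (\<forall>c\<in>C. \<exists>a b. \<forall>t. c (L t) = a + b * t))"

lemma polyfun_along_line:
  assumes "polyfun C r" "\<forall>c\<in>C. \<exists>a b. \<forall>t. c (L t) = a + b * t"
  shows "\<exists>p. \<forall>t. r (L t) = poly p t"
  using assms(1)
proof induction
  case (coord c)
  then obtain a b where "\<forall>t. c (L t) = a + b * t" using assms(2) by blast
  then show ?case by (intro exI[of _ "[:a, b:]"]) simp
next
  case (const a)
  show ?case by (intro exI[of _ "[:a:]"]) simp
next
  case (add p q)
  then obtain p1 q1 where "\<forall>t. p (L t) = poly p1 t" "\<forall>t. q (L t) = poly q1 t" by blast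
  then show ?case by (intro exI[of _ "p1 + q1"]) simp
next
  case (mult p q)
  then obtain p1 q1 where "\<forall>t. p (L t) = poly p1 t" "\<forall>t. q (L t) = poly q1 t" by blast
  then show ?case by (intro exI[of _ "p1 * q1"]) simp
qed

text \<open>Restricted to the line through \<open>x\<close> and \<open>y\<close>, \<open>r * s\<close> is a nonzero univariate polynomial,
  so it has only finitely many roots.\<close>

lemma polyfun_common_nonzero:
  assumes "affine_lines C" "polyfun C r" "polyfun C s" "r x \<noteq> 0" "s y \<noteq> 0"
  shows "\<exists>z. r z \<noteq> 0 \<and> s z \<noteq> 0"
proof -
  obtain L where L: "L 0 = x" "L 1 = y" "\<forall>c\<in>C. \<exists>a b. \<forall>t. c (L t) = a + b * t"
    using assms(1) unfolding affine_lines_def by blast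
  obtain pr where pr: "\<forall>t. r (L t) = poly pr t" using polyfun_along_line[OF assms(2) L(3)] by blast
  obtain ps where ps: "\<forall>t. s (L t) = poly ps t" using polyfun_along_line[OF assms(3) L(3)] by blast
  have "poly pr 0 \<noteq> 0" using pr L assms by metis
  moreover have "poly ps 1 \<noteq> 0" using ps L assms by metis
  ultimately have "pr * ps \<noteq> 0" by auto
  then have "finite {t. poly (pr * ps) t = 0}" by (rule poly_roots_finite)
  then obtain t where "poly (pr * ps) t \<noteq> 0"
    using ex_new_if_finite[OF infinite_UNIV_char_0] by blast
  then have "r (L t) \<noteq> 0 \<and> s (L t) \<noteq> 0" using pr ps by simp
  then show ?thesis by blast
qed

lemma generically_mono: "generically C P \<Longrightarrow> (\<And>x. P x \<Longrightarrow> Q x) \<Longrightarrow> generically C Q"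
  unfolding generically_def by blast

lemma generically_ex: "generically C P \<Longrightarrow> \<exists>x. P x"
  unfolding generically_def by blast

lemma generically_nonzero: "polyfun C r \<Longrightarrow> r x \<noteq> 0 \<Longrightarrow> generically C (\<lambda>x. r x \<noteq> 0)"
  unfolding generically_def by blast

lemma generically_conj:
  assumes "affine_lines C" "generically C P" "generically C Q"
  shows "generically C (\<lambda>x. P x \<and> Q x)"
proof -
  obtain r x where r: "polyfun C r" "r x \<noteq> 0" "\<forall>x. r x \<noteq> 0 \<longrightarrow> P x"
    using assms(2) unfolding generically_def by blast
  obtain s y where s: "polyfun C s" "s y \<noteq> 0" "\<forall>x. s x \<noteq> 0 \<longrightarrow> Q x"
    using assms(3) unfolding generically_def by blast
  obtain z where "r z \<noteq> 0 \<and> s z \<noteq> 0"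
    using polyfun_common_nonzero[OF assms(1) r(1) s(1) r(2) s(2)] by blast
  then show ?thesis unfolding generically_def using r s
    by (intro exI[of _ "\<lambda>x. r x * s x"]) (auto intro: polyfun.mult)
qed

lemma polyfun_eq_0_if_generically:
  assumes "affine_lines C" "polyfun C p" "generically C (\<lambda>x. p x = 0)"
  shows "p x = 0"
proof (rule ccontr)
  assume "p x \<noteq> 0"
  obtain r y where r: "polyfun C r" "r y \<noteq> 0" "\<forall>x. r x \<noteq> 0 \<longrightarrow> p x = 0"
    using assms(3) unfolding generically_def by blast
  from polyfun_common_nonzero[OF assms(1) r(1) assms(2) r(2) \<open>p x \<noteq> 0\<close>] r(3) show False
    by blast
qed

section \<open>Rational functions with a prescribed denominator\<close>

text \<open>\<open>rat_fun C D f\<close>: \<open>f\<close> is regular on the principal open set \<open>{D \<noteq> 0}\<close>; its values where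
  \<open>D\<close> vanishes are irrelevant.\<close>

definition rat_fun :: "('a \<Rightarrow> complex) set \<Rightarrow> ('a \<Rightarrow> complex) \<Rightarrow> ('a \<Rightarrow> complex) \<Rightarrow> bool" where
  "rat_fun C D f \<longleftrightarrow> (\<exists>n h. polyfun C h \<and> (\<forall>x. D x \<noteq> 0 \<longrightarrow> f x = h x / D x ^ n))"

definition rat_map ::
  "('a \<Rightarrow> complex) set \<Rightarrow> ('b \<Rightarrow> complex) set \<Rightarrow> ('a \<Rightarrow> complex) \<Rightarrow> ('a \<Rightarrow> 'b) \<Rightarrow> bool" where
  "rat_map CX CY D f \<longleftrightarrow> (\<forall>c\<in>CY. rat_fun CX D (\<lambda>x. c (f x)))"

lemma rat_fun_of_polyfun: "polyfun C g \<Longrightarrow> rat_fun C D g"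
  unfolding rat_fun_def by (intro exI[of _ 0] exI[of _ g]) simp

lemma rat_fun_const: "rat_fun C D (\<lambda>x. a)"
  by (rule rat_fun_of_polyfun[OF polyfun.const])

lemma rat_fun_add:
  assumes "polyfun C D" "rat_fun C D f" "rat_fun C D g"
  shows "rat_fun C D (\<lambda>x. f x + g x)"
proof -
  obtain n1 h1 where 1: "polyfun C h1" "\<forall>x. D x \<noteq> 0 \<longrightarrow> f x = h1 x / D x ^ n1"
    using assms(2) unfolding rat_fun_def by blast
  obtain n2 h2 where 2: "polyfun C h2" "\<forall>x. D x \<noteq> 0 \<longrightarrow> g x = h2 x / D x ^ n2"
    using assms(3) unfolding rat_fun_def by blast
  show ?thesis unfolding rat_fun_def
  proof (intro exI conjI allI impI)
    show "polyfun C (\<lambda>x. h1 x * D x ^ n2 + h2 x * D x ^ n1)"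
      using 1 2 assms(1) by (intro polyfun.add polyfun.mult polyfun_power)
    fix x assume "D x \<noteq> 0"
    then show "f x + g x = (h1 x * D x ^ n2 + h2 x * D x ^ n1) / D x ^ (n1 + n2)"
      using 1 2 by (simp add: field_simps power_add)
  qed
qed

lemma rat_fun_mult:
  assumes "rat_fun C D f" "rat_fun C D g"
  shows "rat_fun C D (\<lambda>x. f x * g x)"
proof -
  obtain n1 h1 where 1: "polyfun C h1" "\<forall>x. D x \<noteq> 0 \<longrightarrow> f x = h1 x / D x ^ n1"
    using assms(1) unfolding rat_fun_def by blast
  obtain n2 h2 where 2: "polyfun C h2" "\<forall>x. D x \<noteq> 0 \<longrightarrow> g x = h2 x / D x ^ n2"
    using assms(2) unfolding rat_fun_def by blast
  show ?thesis unfolding rat_fun_def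
  proof (intro exI conjI allI impI)
    show "polyfun C (\<lambda>x. h1 x * h2 x)" using 1 2 by (intro polyfun.mult)
    fix x assume "D x \<noteq> 0"
    then show "f x * g x = (h1 x * h2 x) / D x ^ (n1 + n2)"
      using 1 2 by (simp add: power_add)
  qed
qed

lemma rat_fun_uminus: "rat_fun C D f \<Longrightarrow> rat_fun C D (\<lambda>x. - f x)"
  using rat_fun_mult[OF rat_fun_const[of C D "-1"]] by simp

lemma rat_fun_diff:
  "polyfun C D \<Longrightarrow> rat_fun C D f \<Longrightarrow> rat_fun C D g \<Longrightarrow> rat_fun C D (\<lambda>x. f x - g x)"
  using rat_fun_add[OF _ _ rat_fun_uminus] by simp

lemma rat_fun_power: "rat_fun C D f \<Longrightarrow> rat_fun C D (\<lambda>x. f x ^ n)"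
  by (induction n) (auto intro: rat_fun_const rat_fun_mult)

lemma rat_fun_mult_den:
  assumes "polyfun C E" "rat_fun C D f"
  shows "rat_fun C (\<lambda>x. D x * E x) f"
proof -
  obtain n h where h: "polyfun C h" "\<forall>x. D x \<noteq> 0 \<longrightarrow> f x = h x / D x ^ n"
    using assms(2) unfolding rat_fun_def by blast
  show ?thesis unfolding rat_fun_def
  proof (intro exI conjI allI impI)
    show "polyfun C (\<lambda>x. h x * E x ^ n)"
      using h assms(1) by (intro polyfun.mult polyfun_power)
    fix x assume "D x * E x \<noteq> 0"
    then show "f x = h x * E x ^ n / (D x * E x) ^ n"
      using h by (simp add: power_mult_distrib)
  qed
qed

lemma polyfun_if_rat_fun_1: "rat_fun C (\<lambda>x. 1) g \<Longrightarrow> polyfun C g"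
proof -
  assume "rat_fun C (\<lambda>x. 1) g"
  then obtain n h where "polyfun C h" "\<And>x. g x = h x" unfolding rat_fun_def by auto
  then show ?thesis by (metis ext)
qed

lemma rat_fun_compose_polyfun:
  assumes "polyfun CX D" "rat_map CX CY D f" "polyfun CY p"
  shows "rat_fun CX D (\<lambda>x. p (f x))"
  using assms(3)
proof induction
  case (coord c)
  then show ?case using assms(2) unfolding rat_map_def by blast
next
  case (const a)
  show ?case by (rule rat_fun_const)
next
  case (add p q)
  then show ?case using assms(1) by (intro rat_fun_add)
next
  case (mult p q)
  then show ?case by (intro rat_fun_mult)
qed

lemma polyfun_compose:
  assumes "rat_map CX CY (\<lambda>x. 1) f" "polyfun CY p"
  shows "polyfun CX (\<lambda>x. p (f x))"
  by (rule polyfun_if_rat_fun_1, rule rat_fun_compose_polyfun[OF polyfun.const assms])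

lemma rat_fun_compose:
  assumes "polyfun CX D" "rat_map CX CY D f" "rat_fun CY E g" "polyfun CX k"
    "\<And>x. D x \<noteq> 0 \<Longrightarrow> E (f x) = k x / D x ^ m"
  shows "rat_fun CX (\<lambda>x. D x * k x) (\<lambda>x. g (f x))"
proof -
  obtain n h where h: "polyfun CY h" "\<And>y. E y \<noteq> 0 \<Longrightarrow> g y = h y / E y ^ n"
    using assms(3) unfolding rat_fun_def by blast
  obtain a h' where h': "polyfun CX h'" "\<And>x. D x \<noteq> 0 \<Longrightarrow> h (f x) = h' x / D x ^ a"
    using rat_fun_compose_polyfun[OF assms(1,2) h(1)] unfolding rat_fun_def by blast
  show ?thesis unfolding rat_fun_def
  proof (intro exI conjI allI impI)
    show "polyfun CX (\<lambda>x. h' x * D x ^ (m * n + n) * k x ^ a)"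
      using assms(1,4) h'(1) by (intro polyfun.mult polyfun_power)
    fix x assume "D x * k x \<noteq> 0"
    then have nz: "D x \<noteq> 0" "k x \<noteq> 0" by auto
    then have E: "E (f x) = k x / D x ^ m" "E (f x) \<noteq> 0" using assms(5) by auto
    have "g (f x) = h' x / D x ^ a / (k x / D x ^ m) ^ n"
      using h(2)[OF E(2)] h'(2)[OF nz(1)] E(1) by simp
    also have "\<dots> = h' x * D x ^ (m * n + n) * k x ^ a / (D x * k x) ^ (a + n)"
      using nz by (simp add: power_add power_mult power_mult_distrib power_divide field_simps)
    finally show "g (f x) = h' x * D x ^ (m * n + n) * k x ^ a / (D x * k x) ^ (a + n)" .
  qed
qed

lemma rat_fun_compose_den:
  assumes "polyfun CX D" "rat_map CX CY D f" "polyfun CY E"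
  obtains D' where "polyfun CX D'" "\<And>x. D' x \<noteq> 0 \<longleftrightarrow> D x \<noteq> 0 \<and> E (f x) \<noteq> 0"
    "\<And>h. rat_fun CX D h \<Longrightarrow> rat_fun CX D' h"
    "\<And>g. rat_fun CY E g \<Longrightarrow> rat_fun CX D' (\<lambda>x. g (f x))"
proof -
  obtain m k where k: "polyfun CX k" "\<And>x. D x \<noteq> 0 \<Longrightarrow> E (f x) = k x / D x ^ m"
    using rat_fun_compose_polyfun[OF assms] unfolding rat_fun_def by blast
  show ?thesis
  proof
    show "polyfun CX (\<lambda>x. D x * k x)" using assms(1) k(1) by (rule polyfun.mult)
    show "D x * k x \<noteq> 0 \<longleftrightarrow> D x \<noteq> 0 \<and> E (f x) \<noteq> 0" for x
      using k(2)[of x] by auto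
    show "rat_fun CX (\<lambda>x. D x * k x) h" if "rat_fun CX D h" for h
      by (rule rat_fun_mult_den[OF k(1) that])
    show "rat_fun CX (\<lambda>x. D x * k x) (\<lambda>x. g (f x))" if "rat_fun CY E g" for g
      by (rule rat_fun_compose[OF assms(1,2) that k])
  qed
qed

lemma rat_fun_inverse_den:
  assumes "polyfun C D" "rat_fun C D g"
  obtains D' where "polyfun C D'" "\<And>x. D' x \<noteq> 0 \<longleftrightarrow> D x \<noteq> 0 \<and> g x \<noteq> 0"
    "\<And>h. rat_fun C D h \<Longrightarrow> rat_fun C D' h" "rat_fun C D' (\<lambda>x. 1 / g x)"
proof -
  obtain n k where k: "polyfun C k" "\<And>x. D x \<noteq> 0 \<Longrightarrow> g x = k x / D x ^ n"
    using assms(2) unfolding rat_fun_def by blast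
  show ?thesis
  proof
    show "polyfun C (\<lambda>x. D x * k x)" using assms(1) k(1) by (rule polyfun.mult)
    show "D x * k x \<noteq> 0 \<longleftrightarrow> D x \<noteq> 0 \<and> g x \<noteq> 0" for x
      using k(2)[of x] by auto
    show "rat_fun C (\<lambda>x. D x * k x) h" if "rat_fun C D h" for h
      by (rule rat_fun_mult_den[OF k(1) that])
    show "rat_fun C (\<lambda>x. D x * k x) (\<lambda>x. 1 / g x)"
      unfolding rat_fun_def
    proof (intro exI conjI allI impI)
      show "polyfun C (\<lambda>x. D x ^ (n + 1))" by (rule polyfun_power[OF assms(1)])
      fix x assume "D x * k x \<noteq> 0"
      then have "D x \<noteq> 0" "k x \<noteq> 0" "g x = k x / D x ^ n" using k(2) by auto
      then show "1 / g x = D x ^ (n + 1) / (D x * k x) ^ 1" by simp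
    qed
  qed
qed

lemma rat_map_compose_of_rat_fun:
  "(\<And>g. rat_fun CY E g \<Longrightarrow> rat_fun CX D (\<lambda>x. g (f x))) \<Longrightarrow> rat_map CY CZ E h \<Longrightarrow>
     rat_map CX CZ D (\<lambda>x. h (f x))"
  unfolding rat_map_def by blast

lemma rat_map_id: "rat_map C C D (\<lambda>x. x)"
  unfolding rat_map_def by (auto intro: rat_fun_of_polyfun polyfun.coord)

lemma rational_mapD:
  assumes "rational_map CX CY f q"
  shows "rat_map CX CY q f" "polyfun CX q" "\<exists>x. q x \<noteq> 0"
proof -
  show "rat_map CX CY q f"
    using assms unfolding rational_map_def rat_map_def rat_fun_def by (metis power_one_right)
qed (use assms in \<open>auto simp: rational_map_def\<close>)

text \<open>Finitely many coordinates admit a common power of \<open>D\<close> as denominator.\<close>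

lemma rational_map_if_rat_map:
  assumes "finite CY" "polyfun CX D" "D x0 \<noteq> 0" "rat_map CX CY D f"
  obtains n where "rational_map CX CY f (\<lambda>x. D x ^ n)"
proof -
  have "\<forall>c\<in>CY. \<exists>n h. polyfun CX h \<and> (\<forall>x. D x \<noteq> 0 \<longrightarrow> c (f x) = h x / D x ^ n)"
    using assms(4) unfolding rat_map_def rat_fun_def by blast
  then obtain N H
    where NH: "\<forall>c\<in>CY. polyfun CX (H c) \<and> (\<forall>x. D x \<noteq> 0 \<longrightarrow> c (f x) = H c x / D x ^ N c)"
    by metis
  define n where "n = Max (N ` CY) + 1"
  have le: "N c \<le> n" if "c \<in> CY" for c
    unfolding n_def using assms(1) that by (simp add: le_SucI)
  have "rational_map CX CY f (\<lambda>x. D x ^ n)"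
    unfolding rational_map_def
  proof (intro conjI ballI)
    show "polyfun CX (\<lambda>x. D x ^ n)" by (rule polyfun_power[OF assms(2)])
    show "\<exists>x. D x ^ n \<noteq> 0" using assms(3) by auto
    fix c assume c: "c \<in> CY"
    show "\<exists>p. polyfun CX p \<and> (\<forall>x. D x ^ n \<noteq> 0 \<longrightarrow> c (f x) = p x / D x ^ n)"
    proof (intro exI conjI allI impI)
      show "polyfun CX (\<lambda>x. H c x * D x ^ (n - N c))"
        using NH c assms(2) by (auto intro: polyfun.mult polyfun_power)
      fix x assume "D x ^ n \<noteq> 0"
      then have "D x \<noteq> 0" by (auto simp: n_def)
      moreover have "D x ^ n = D x ^ (n - N c) * D x ^ N c"
        using le[OF c] by (metis le_add_diff_inverse2 power_add)
      ultimately show "c (f x) = H c x * D x ^ (n - N c) / D x ^ n"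
        using NH c by simp
    qed
  qed
  then show ?thesis by (rule that)
qed

lemma rat_fun_precompose_polymap:
  assumes "rat_map CX CY (\<lambda>x. 1) f" "rat_fun CY E g"
  shows "rat_fun CX (\<lambda>x. E (f x)) (\<lambda>x. g (f x))"
proof -
  obtain n h where "polyfun CY h" "\<forall>y. E y \<noteq> 0 \<longrightarrow> g y = h y / E y ^ n"
    using assms(2) unfolding rat_fun_def by blast
  then show ?thesis unfolding rat_fun_def
    by (intro exI[of _ n] exI[of _ "\<lambda>x. h (f x)"] conjI polyfun_compose[OF assms(1)]) auto
qed

lemma rat_map_precompose_polymap:
  assumes "rat_map CX CY (\<lambda>x. 1) f" "rat_map CY CZ E g"
  shows "rat_map CX CZ (\<lambda>x. E (f x)) (\<lambda>x. g (f x))"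
  unfolding rat_map_def
proof
  fix c assume "c \<in> CZ"
  then have "rat_fun CY E (\<lambda>y. c (g y))" using assms(2) unfolding rat_map_def by blast
  then show "rat_fun CX (\<lambda>x. E (f x)) (\<lambda>x. c (g (f x)))"
    by (rule rat_fun_precompose_polymap[OF assms(1)])
qed

lemma rat_map_postcompose_polymap:
  assumes "polyfun CX D" "rat_map CX CY D f" "rat_map CY CZ (\<lambda>x. 1) g"
  shows "rat_map CX CZ D (\<lambda>x. g (f x))"
  unfolding rat_map_def
proof
  fix c assume "c \<in> CZ"
  then have "polyfun CY (\<lambda>y. c (g y))"
    using assms(3) unfolding rat_map_def by (blast intro: polyfun_if_rat_fun_1)
  then show "rat_fun CX D (\<lambda>x. c (g (f x)))" by (rule rat_fun_compose_polyfun[OF assms(1,2)])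
qed

section \<open>The identity principle\<close>

lemma rat_fun_eq_if_generically_eq:
  assumes "affine_lines CX" "polyfun CY D1" "polyfun CY D2" "rat_fun CY D1 f" "rat_fun CY D2 g"
    "rat_map CX CY (\<lambda>x. 1) \<phi>" "surj \<phi>"
    "generically CX (\<lambda>x. D1 (\<phi> x) \<noteq> 0 \<and> D2 (\<phi> x) \<noteq> 0 \<and> f (\<phi> x) = g (\<phi> x))"
    "D1 y \<noteq> 0" "D2 y \<noteq> 0"
  shows "f y = g y"
proof -
  obtain n1 h1 where 1: "polyfun CY h1" "\<And>y. D1 y \<noteq> 0 \<Longrightarrow> f y = h1 y / D1 y ^ n1"
    using assms(4) unfolding rat_fun_def by blast
  obtain n2 h2 where 2: "polyfun CY h2" "\<And>y. D2 y \<noteq> 0 \<Longrightarrow> g y = h2 y / D2 y ^ n2"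
    using assms(5) unfolding rat_fun_def by blast
  define h where "h = (\<lambda>y. h1 y * D2 y ^ n2 - h2 y * D1 y ^ n1)"
  have eq_iff: "f y = g y \<longleftrightarrow> h y = 0" if "D1 y \<noteq> 0" "D2 y \<noteq> 0" for y
    using that 1(2)[of y] 2(2)[of y] unfolding h_def by (simp add: frac_eq_eq)
  have "polyfun CY h" unfolding h_def using 1 2 assms(2,3)
    by (intro polyfun_diff polyfun.mult polyfun_power)
  then have "polyfun CX (\<lambda>x. h (\<phi> x))" by (rule polyfun_compose[OF assms(6)])
  moreover have "generically CX (\<lambda>x. h (\<phi> x) = 0)"
    by (rule generically_mono[OF assms(8)]) (use eq_iff in blast)
  ultimately have "h (\<phi> x) = 0" for x by (rule polyfun_eq_0_if_generically[OF assms(1)])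
  then have "h y = 0" using \<open>surj \<phi>\<close> by (metis surjD)
  then show ?thesis using eq_iff assms(9,10) by blast
qed

lemma rat_map_eq_if_generically_eq:
  assumes "affine_lines CX" "\<And>u v. (\<And>c. c \<in> CZ \<Longrightarrow> c u = c v) \<Longrightarrow> u = v"
    "polyfun CY D1" "polyfun CY D2" "rat_map CY CZ D1 f" "rat_map CY CZ D2 g"
    "rat_map CX CY (\<lambda>x. 1) \<phi>" "surj \<phi>"
    "generically CX (\<lambda>x. D1 (\<phi> x) \<noteq> 0 \<and> D2 (\<phi> x) \<noteq> 0 \<and> f (\<phi> x) = g (\<phi> x))"
    "D1 y \<noteq> 0" "D2 y \<noteq> 0"
  shows "f y = g y"
proof (rule assms(2))
  fix c assume "c \<in> CZ"
  then show "c (f y) = c (g y)"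
    using assms(5,6) unfolding rat_map_def
    by (intro rat_fun_eq_if_generically_eq[OF assms(1,3,4) _ _ assms(7,8) _ assms(10,11)]
        generically_mono[OF assms(9)]) auto
qed

section \<open>Dominant maps\<close>

definition dominant ::
  "('a \<Rightarrow> complex) set \<Rightarrow> ('b \<Rightarrow> complex) set \<Rightarrow> ('a \<Rightarrow> complex) \<Rightarrow> ('a \<Rightarrow> 'b) \<Rightarrow> bool" where
  "dominant CX CY D f \<longleftrightarrow> polyfun CX D \<and> rat_map CX CY D f \<and>
     (\<forall>r. polyfun CY r \<longrightarrow> (\<exists>y. r y \<noteq> 0) \<longrightarrow> (\<exists>x. D x \<noteq> 0 \<and> r (f x) \<noteq> 0))"

lemma generically_pullback:
  assumes "dominant CX CY D f" "generically CY P"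
  shows "generically CX (\<lambda>x. D x \<noteq> 0 \<and> P (f x))"
proof -
  obtain r y where r: "polyfun CY r" "r y \<noteq> 0" "\<forall>y. r y \<noteq> 0 \<longrightarrow> P y"
    using assms(2) unfolding generically_def by blast
  have D: "polyfun CX D" "rat_map CX CY D f" using assms(1) unfolding dominant_def by auto
  obtain n h where h: "polyfun CX h" "\<forall>x. D x \<noteq> 0 \<longrightarrow> r (f x) = h x / D x ^ n"
    using rat_fun_compose_polyfun[OF D r(1)] unfolding rat_fun_def by blast
  obtain x where x: "D x \<noteq> 0" "r (f x) \<noteq> 0" using assms(1) r unfolding dominant_def by blast
  show ?thesis unfolding generically_def
  proof (intro exI[of _ "\<lambda>x. D x * h x"] conjI)
    show "polyfun CX (\<lambda>x. D x * h x)" using D h by (intro polyfun.mult)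
    show "\<exists>x. D x * h x \<noteq> 0" using x h by (intro exI[of _ x]) auto
    show "\<forall>z. D z * h z \<noteq> 0 \<longrightarrow> D z \<noteq> 0 \<and> P (f z)" using h r by auto
  qed
qed

lemma generically_compose:
  "dominant CX CY D f \<Longrightarrow> generically CY P \<Longrightarrow> generically CX (\<lambda>x. P (f x))"
  by (rule generically_mono[OF generically_pullback]) auto

lemma dominant_if_right_inverse:
  assumes "affine_lines CY" "polyfun CX D" "rat_map CX CY D f"
    "generically CY (\<lambda>y. D (g y) \<noteq> 0 \<and> f (g y) = y)"
  shows "dominant CX CY D f"
  unfolding dominant_def
proof (intro conjI allI impI assms(2,3))
  fix r assume r: "polyfun CY r" "\<exists>y. r y \<noteq> 0"
  then obtain y0 where "r y0 \<noteq> 0" by blast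
  then have "generically CY (\<lambda>y. r y \<noteq> 0)" by (rule generically_nonzero[OF r(1)])
  then have "generically CY (\<lambda>y. r y \<noteq> 0 \<and> (D (g y) \<noteq> 0 \<and> f (g y) = y))"
    by (intro generically_conj[OF assms(1) _ assms(4)])
  then obtain y where "r y \<noteq> 0" "D (g y) \<noteq> 0" "f (g y) = y" using generically_ex by blast
  then show "\<exists>x. D x \<noteq> 0 \<and> r (f x) \<noteq> 0" by metis
qed

lemma dominant_if_surj:
  assumes "rat_map CX CY (\<lambda>x. 1) f" "surj f"
  shows "dominant CX CY (\<lambda>x. 1) f"
  unfolding dominant_def
proof (intro conjI allI impI)
  show "polyfun CX (\<lambda>x. 1)" by (rule polyfun.const)
  show "rat_map CX CY (\<lambda>x. 1) f" by (rule assms(1))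
  fix r :: "'b \<Rightarrow> complex" assume "\<exists>y. r y \<noteq> 0"
  then obtain y where "r y \<noteq> 0" by blast
  moreover obtain x where "y = f x" using surjD[OF assms(2)] by blast
  ultimately show "\<exists>x. (1::complex) \<noteq> 0 \<and> r (f x) \<noteq> 0" by auto
qed

lemma generically_rat_fun_nonzero:
  assumes "polyfun C E" "rat_fun C E f" "E y \<noteq> 0" "f y \<noteq> 0"
  shows "generically C (\<lambda>y. E y \<noteq> 0 \<and> f y \<noteq> 0)"
proof -
  obtain n h where h: "polyfun C h" "\<forall>x. E x \<noteq> 0 \<longrightarrow> f x = h x / E x ^ n"
    using assms(2) unfolding rat_fun_def by blast
  have "E y * h y \<noteq> 0" using h assms by auto
  then have "generically C (\<lambda>x. E x * h x \<noteq> 0)"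
    by (rule generically_nonzero[OF polyfun.mult[OF assms(1) h(1)]])
  then show ?thesis by (rule generically_mono) (use h in auto)
qed

section \<open>Matrices\<close>

lemma matrix_inv_unique:
  fixes M :: "'a::semiring_1^'n^'m"
  assumes "M ** Y = mat 1" "Y ** M = mat 1"
  shows "matrix_inv M = Y"
  unfolding matrix_inv_def
proof (rule some_equality)
  fix Z assume Z: "M ** Z = mat 1 \<and> Z ** M = mat 1"
  have "Z = Z ** (M ** Y)" using assms by (simp only: matrix_mul_rid)
  also have "\<dots> = (Z ** M) ** Y" by (rule matrix_mul_assoc)
  also have "\<dots> = Y" using Z by (simp only: matrix_mul_lid)
  finally show "Z = Y" .
qed (use assms in blast)

lemma matrix_inv_inverse:
  fixes M :: "'a::semiring_1^'n^'m"
  assumes "invertible M"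
  shows "M ** matrix_inv M = mat 1" "matrix_inv M ** M = mat 1"
proof -
  obtain Y where Y: "M ** Y = mat 1" "Y ** M = mat 1" using assms unfolding invertible_def by blast
  then have "matrix_inv M = Y" by (rule matrix_inv_unique)
  with Y show "M ** matrix_inv M = mat 1" "matrix_inv M ** M = mat 1" by auto
qed

lemma matrix_mult_cancel_right:
  fixes X :: "'a::semiring_1^'n^'m"
  shows "A ** B = mat 1 \<Longrightarrow> X ** A ** B = X"
  by (metis matrix_mul_assoc matrix_mul_rid)

lemma matrix_mult_cancel_left:
  fixes X :: "'a::semiring_1^'n^'m"
  shows "A ** B = mat 1 \<Longrightarrow> A ** (B ** X) = X"
  by (metis matrix_mul_assoc matrix_mul_lid)

lemma det_conj:
  fixes A M :: "'a::field^'n^'n"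
  assumes "invertible A"
  shows "det (A ** M ** matrix_inv A) = det M"
proof -
  have "det (A ** M ** matrix_inv A) = det M * det (A ** matrix_inv A)"
    by (simp only: det_mul mult.commute mult.left_commute)
  then show ?thesis using matrix_inv_inverse[OF assms] by (simp add: det_I)
qed

lemma trace_conj:
  fixes A M :: "'a::field^'n^'n"
  assumes "invertible A"
  shows "trace (A ** M ** matrix_inv A) = trace M"
proof -
  have "trace (A ** M ** matrix_inv A) = trace (matrix_inv A ** (A ** M))"
    by (rule trace_mul_sym)
  also have "\<dots> = trace M"
    using matrix_inv_inverse[OF assms] by (simp only: matrix_mul_assoc matrix_mul_lid)
  finally show ?thesis .
qed

type_synonym mat2 = "complex^2^2"
type_synonym vec2 = "complex^2"

definition matrix2 :: "complex \<Rightarrow> complex \<Rightarrow> complex \<Rightarrow> complex \<Rightarrow> mat2" where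
  "matrix2 a b c d = vector [vector [a, b], vector [c, d]]"

lemma matrix2_nth [simp]:
  "matrix2 a b c d $ 1 $ 1 = a" "matrix2 a b c d $ 1 $ 2 = b"
  "matrix2 a b c d $ 2 $ 1 = c" "matrix2 a b c d $ 2 $ 2 = d"
  by (simp_all add: matrix2_def)

lemma mat2_eq_iff:
  "(M :: mat2) = N \<longleftrightarrow> M$1$1 = N$1$1 \<and> M$1$2 = N$1$2 \<and> M$2$1 = N$2$1 \<and> M$2$2 = N$2$2"
  by (auto simp: vec_eq_iff forall_2)

lemma vec2_eq_iff: "(u :: vec2) = v \<longleftrightarrow> u$1 = v$1 \<and> u$2 = v$2"
  by (auto simp: vec_eq_iff forall_2)

lemma matrix_mult_nth2 [simp]: "((A :: mat2) ** B) $ i $ j = A$i$1 * B$1$j + A$i$2 * B$2$j"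
  by (simp add: matrix_matrix_mult_def sum_2)

lemma Inv_nth [simp]:
  "Inv M $ 1 = M$1$1 + M$2$2" "Inv M $ 2 = M$1$1 * M$2$2 - M$1$2 * M$2$1"
  by (simp_all add: Inv_def trace_def sum_2 det_2)

lemma Inv_conj: "invertible A \<Longrightarrow> Inv (A ** M ** matrix_inv A) = Inv M"
  by (simp add: Inv_def det_conj trace_conj)

text \<open>\<open>pencil a b M = a \<one> + b M\<close>; its invariants depend only on \<open>a\<close>, \<open>b\<close> and \<open>Inv M\<close>.\<close>

definition pencil :: "complex \<Rightarrow> complex \<Rightarrow> mat2 \<Rightarrow> mat2" where
  "pencil a b M = matrix2 (a + b * M$1$1) (b * M$1$2) (b * M$2$1) (a + b * M$2$2)"

definition pencil_Inv :: "complex \<Rightarrow> complex \<Rightarrow> vec2 \<Rightarrow> vec2" where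
  "pencil_Inv a b y = vector [2*a + b * y$1, a^2 + a * b * y$1 + b^2 * y$2]"

lemma pencil_Inv_nth [simp]:
  "pencil_Inv a b y $ 1 = 2*a + b * y$1" "pencil_Inv a b y $ 2 = a^2 + a * b * y$1 + b^2 * y$2"
  by (simp_all add: pencil_Inv_def)

lemma Inv_pencil: "Inv (pencil a b M) = pencil_Inv a b (Inv M)"
  by (simp add: vec2_eq_iff pencil_def power2_eq_square algebra_simps)

lemma pencil_inverse_left: "b \<noteq> 0 \<Longrightarrow> pencil (-a/b) (1/b) (pencil a b M) = M"
  by (simp add: mat2_eq_iff pencil_def field_simps)

lemma pencil_inverse_right: "b \<noteq> 0 \<Longrightarrow> pencil a b (pencil (-a/b) (1/b) N) = N"
  by (simp add: mat2_eq_iff pencil_def field_simps)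

lemma Inv_pencil_inverse:
  assumes "b \<noteq> 0" "pencil_Inv a b y = Inv N"
  shows "Inv (pencil (-a/b) (1/b) N) = y"
proof -
  have "pencil_Inv a b (Inv (pencil (-a/b) (1/b) N)) = Inv N"
    by (simp only: Inv_pencil[symmetric] pencil_inverse_right[OF assms(1)])
  then have "pencil_Inv a b (Inv (pencil (-a/b) (1/b) N)) = pencil_Inv a b y"
    using assms(2) by simp
  moreover have "inj (pencil_Inv a b)"
    using assms(1) by (intro injI) (auto simp: vec2_eq_iff power2_eq_square)
  ultimately show ?thesis by (metis injD)
qed

lemma conj_pencil:
  assumes "X ** Y = mat 1"
  shows "X ** pencil a b G ** Y = pencil a b (X ** G ** Y)"
proof -
  have "X$1$1 * Y$1$1 + X$1$2 * Y$2$1 = 1" "X$1$1 * Y$1$2 + X$1$2 * Y$2$2 = 0"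
    "X$2$1 * Y$1$1 + X$2$2 * Y$2$1 = 0" "X$2$1 * Y$1$2 + X$2$2 * Y$2$2 = 1"
    using assms unfolding mat2_eq_iff by (auto simp: mat_def)
  then show ?thesis unfolding mat2_eq_iff pencil_def matrix_mult_nth2 matrix2_nth by algebra
qed

text \<open>A matrix with nonzero lower left entry is cyclic, so every matrix commuting with it is a
  polynomial in it, i.e. lies in its pencil.\<close>

lemma commuting_eq_pencil:
  assumes "G$2$1 \<noteq> 0" "G ** P = P ** (G :: mat2)"
  shows "P = pencil (P$1$1 - (P$2$1 / G$2$1) * G$1$1) (P$2$1 / G$2$1) G"
proof -
  have e: "G$1$1 * P$1$1 + G$1$2 * P$2$1 = P$1$1 * G$1$1 + P$1$2 * G$2$1"
          "G$2$1 * P$1$1 + G$2$2 * P$2$1 = P$2$1 * G$1$1 + P$2$2 * G$2$1"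
    using assms(2) unfolding mat2_eq_iff by auto
  show ?thesis unfolding mat2_eq_iff pencil_def matrix2_nth
    using assms(1) e by (simp add: field_simps)
qed

definition companion :: "vec2 \<Rightarrow> mat2" where
  "companion y = matrix2 0 (- (y$2)) 1 (y$1)"

lemma Inv_companion [simp]: "Inv (companion y) = y"
  by (simp add: vec2_eq_iff companion_def)

text \<open>The Krylov matrix of \<open>M\<close> has columns \<open>e\<^sub>1\<close> and \<open>M e\<^sub>1\<close>; it conjugates \<open>M\<close> to the
  companion matrix of its invariants as soon as these columns are independent.\<close>

definition krylov :: "mat2 \<Rightarrow> mat2" where
  "krylov M = matrix2 1 (M$1$1) 0 (M$2$1)"

lemma invertible_krylov: "M$2$1 \<noteq> 0 \<Longrightarrow> invertible (krylov M)"
  by (simp add: invertible_det_nz det_2 krylov_def)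

lemma krylov_conj_companion:
  assumes "M$2$1 \<noteq> 0"
  shows "M = krylov M ** companion (Inv M) ** matrix_inv (krylov M)"
proof -
  have "M = M ** krylov M ** matrix_inv (krylov M)"
    by (simp add: matrix_mult_cancel_right[OF matrix_inv_inverse(1)[OF invertible_krylov[OF assms]]])
  also have "M ** krylov M = krylov M ** companion (Inv M)"
    unfolding krylov_def companion_def mat2_eq_iff by (simp add: algebra_simps)
  finally show ?thesis .
qed

lemma similar_if_same_Inv:
  assumes "M$2$1 \<noteq> 0" "G$2$1 \<noteq> 0" "Inv G = Inv M"
  obtains X where "invertible X" "X ** G ** matrix_inv X = M"
proof -
  define KM KG where "KM = krylov M" and "KG = krylov G"
  have KM: "KM ** matrix_inv KM = mat 1" "matrix_inv KM ** KM = mat 1"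
    unfolding KM_def by (rule matrix_inv_inverse[OF invertible_krylov[OF assms(1)]])+
  have KG: "KG ** matrix_inv KG = mat 1" "matrix_inv KG ** KG = mat 1"
    unfolding KG_def by (rule matrix_inv_inverse[OF invertible_krylov[OF assms(2)]])+
  define X Y where "X = KM ** matrix_inv KG" and "Y = KG ** matrix_inv KM"
  have XY: "X ** Y = mat 1" "Y ** X = mat 1"
    unfolding X_def Y_def using KM KG by (metis matrix_mult_cancel_left matrix_mul_assoc)+
  then have "invertible X" "matrix_inv X = Y"
    unfolding invertible_def by (auto intro: matrix_inv_unique)
  moreover have "X ** G ** Y = M"
  proof -
    have "G = KG ** companion (Inv M) ** matrix_inv KG"
      using krylov_conj_companion[OF assms(2)] assms(3) unfolding KG_def by simp
    then have "X ** G ** Y = KM ** (matrix_inv KG ** KG) ** companion (Inv M) **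
        (matrix_inv KG ** KG) ** matrix_inv KM"
      unfolding X_def Y_def by (simp add: matrix_mul_assoc)
    also have "\<dots> = M"
      using krylov_conj_companion[OF assms(1)] KG(2) unfolding KM_def by (simp only: matrix_mul_rid)
    finally show ?thesis .
  qed
  ultimately show ?thesis by (intro that) auto
qed

text \<open>Conjugating by \<open>G + c \<one>\<close> fixes \<open>G\<close>; for all but two values of \<open>c\<close> it is invertible.\<close>

lemma exists_shift_invertible: obtains c where "invertible ((G :: mat2) + matrix2 c 0 0 c)"
proof -
  have det: "det (G + matrix2 c 0 0 c) = c^2 + c * (G$1$1 + G$2$2) + det G" for c
    by (simp add: det_2 power2_eq_square algebra_simps)
  have "\<exists>c\<in>{0, 1, 2}. det (G + matrix2 c 0 0 c) \<noteq> 0"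
  proof (rule ccontr)
    assume "\<not> ?thesis"
    then have "det G = 0" "1 + (G$1$1 + G$2$2) + det G = 0" "4 + 2 * (G$1$1 + G$2$2) + det G = 0"
      using det[of 0] det[of 1] det[of 2] by (auto simp: power2_eq_square)
    then show False by algebra
  qed
  then show ?thesis using that by (auto simp: invertible_det_nz)
qed

lemma shift_commute: "(G + matrix2 c 0 0 c) ** G = G ** (G + matrix2 c 0 0 (c :: complex))"
  unfolding mat2_eq_iff matrix_mult_nth2 vector_add_component matrix2_nth by (intro conjI; algebra)

lemma commute_if_shift_commute:
  assumes "(G + matrix2 c 0 0 c) ** P = P ** (G + matrix2 c 0 0 (c :: complex))"
  shows "G ** P = P ** G"
  using assms unfolding mat2_eq_iff matrix_mult_nth2 vector_add_component matrix2_nth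
  by (elim conjE, intro conjI; algebra)

section \<open>Polynomial maps between matrices and their invariants\<close>

lemma mat_coords_iff: "c \<in> mat_coords \<longleftrightarrow> (\<exists>i j. c = (\<lambda>M. M$i$j))"
  unfolding mat_coords_def by blast

lemma vec_coords_iff: "c \<in> vec_coords \<longleftrightarrow> (\<exists>i. c = (\<lambda>v. v$i))"
  unfolding vec_coords_def by blast

lemma polyfun_mat_nth: "polyfun mat_coords (\<lambda>M. M$i$j)"
  by (rule polyfun.coord) (auto simp: mat_coords_iff)

lemma polyfun_vec_nth: "polyfun vec_coords (\<lambda>v. v$i)"
  by (rule polyfun.coord) (auto simp: vec_coords_iff)

lemma finite_mat_coords: "finite mat_coords"
proof -
  have "mat_coords = (\<lambda>(i, j) (M :: mat2). M$i$j) ` UNIV"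
    unfolding mat_coords_def by auto
  moreover have "finite ((\<lambda>(i, j) (M :: mat2). M$i$j) ` UNIV)" by (rule finite_imageI) simp
  ultimately show ?thesis by simp
qed

lemma finite_vec_coords: "finite vec_coords"
proof -
  have "vec_coords = (\<lambda>i (v :: vec2). v$i) ` UNIV"
    unfolding vec_coords_def by auto
  moreover have "finite ((\<lambda>i (v :: vec2). v$i) ` UNIV)" by (rule finite_imageI) simp
  ultimately show ?thesis by simp
qed

lemma mat_eqI_coords: "(\<And>c. c \<in> mat_coords \<Longrightarrow> c M = c N) \<Longrightarrow> (M :: mat2) = N"
  by (auto simp: vec_eq_iff mat_coords_iff)

lemma vec_eqI_coords: "(\<And>c. c \<in> vec_coords \<Longrightarrow> c u = c v) \<Longrightarrow> (u :: vec2) = v"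
  by (auto simp: vec_eq_iff vec_coords_iff)

lemma affine_lines_mat: "affine_lines mat_coords"
  unfolding affine_lines_def
proof (intro allI)
  fix x y :: mat2
  let ?L = "\<lambda>t. (\<chi> i j. x$i$j + t * (y$i$j - x$i$j)) :: mat2"
  show "\<exists>L. L 0 = x \<and> L 1 = y \<and> (\<forall>c\<in>mat_coords. \<exists>a b. \<forall>t. c (L t) = a + b * t)"
  proof (intro exI[of _ ?L] conjI ballI)
    fix c :: "mat2 \<Rightarrow> complex" assume "c \<in> mat_coords"
    then obtain i j where c: "c = (\<lambda>M. M$i$j)" unfolding mat_coords_iff by blast
    show "\<exists>a b. \<forall>t. c (?L t) = a + b * t" unfolding c
      by (intro exI[of _ "x$i$j"] exI[of _ "y$i$j - x$i$j"]) (simp add: mult.commute)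
  qed (simp_all add: vec_eq_iff)
qed

lemma affine_lines_vec: "affine_lines vec_coords"
  unfolding affine_lines_def
proof (intro allI)
  fix x y :: vec2
  let ?L = "\<lambda>t. (\<chi> i. x$i + t * (y$i - x$i)) :: vec2"
  show "\<exists>L. L 0 = x \<and> L 1 = y \<and> (\<forall>c\<in>vec_coords. \<exists>a b. \<forall>t. c (L t) = a + b * t)"
  proof (intro exI[of _ ?L] conjI ballI)
    fix c :: "vec2 \<Rightarrow> complex" assume "c \<in> vec_coords"
    then obtain i where c: "c = (\<lambda>v. v$i)" unfolding vec_coords_iff by blast
    show "\<exists>a b. \<forall>t. c (?L t) = a + b * t" unfolding c
      by (intro exI[of _ "x$i"] exI[of _ "y$i - x$i"]) (simp add: mult.commute)
  qed (simp_all add: vec_eq_iff)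
qed

lemma rat_map_matI:
  "(\<And>i j. rat_fun CX D (\<lambda>x. f x $ i $ j)) \<Longrightarrow> rat_map CX mat_coords D f"
  unfolding rat_map_def by (auto simp: mat_coords_iff)

lemma rat_map_mat2I:
  assumes "rat_fun CX D (\<lambda>x. f x $ 1 $ 1)" "rat_fun CX D (\<lambda>x. f x $ 1 $ 2)"
    "rat_fun CX D (\<lambda>x. f x $ 2 $ 1)" "rat_fun CX D (\<lambda>x. f x $ 2 $ 2)"
  shows "rat_map CX mat_coords D f"
proof (rule rat_map_matI)
  fix i j :: 2
  show "rat_fun CX D (\<lambda>x. f x $ i $ j)"
    using exhaust_2[of i] exhaust_2[of j] assms by (elim disjE) simp_all
qed

lemma rat_map_vec2I:
  assumes "rat_fun CX D (\<lambda>x. f x $ 1)" "rat_fun CX D (\<lambda>x. f x $ 2)"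
  shows "rat_map CX vec_coords D f"
  unfolding rat_map_def
proof
  fix c assume "c \<in> vec_coords"
  then obtain i where "c = (\<lambda>v. v$i)" unfolding vec_coords_iff by blast
  then show "rat_fun CX D (\<lambda>x. c (f x))" using exhaust_2[of i] assms by auto
qed

lemma rat_map_matD: "rat_map CX mat_coords D f \<Longrightarrow> rat_fun CX D (\<lambda>x. f x $ i $ j)"
  unfolding rat_map_def using mat_coords_iff[of "\<lambda>M. M$i$j"] by auto

lemma polymap_Inv: "rat_map mat_coords vec_coords (\<lambda>x. 1) Inv"
proof (rule rat_map_vec2I; unfold Inv_nth; rule rat_fun_of_polyfun)
  show "polyfun mat_coords (\<lambda>x. x $ 1 $ 1 + x $ 2 $ 2)"
    by (rule polyfun.add; rule polyfun_mat_nth)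
  show "polyfun mat_coords (\<lambda>x. x $ 1 $ 1 * x $ 2 $ 2 - x $ 1 $ 2 * x $ 2 $ 1)"
    by (rule polyfun_diff; rule polyfun.mult; rule polyfun_mat_nth)
qed

lemma polymap_conj: "rat_map mat_coords mat_coords (\<lambda>x. 1) (\<lambda>M. A ** M ** B)"
  by (rule rat_map_matI, unfold matrix_mult_nth2, rule rat_fun_of_polyfun,
      rule polyfun.add; rule polyfun.mult; (rule polyfun.const)?;
      rule polyfun.add; rule polyfun.mult; (rule polyfun.const | rule polyfun_mat_nth))

lemma polymap_companion: "rat_map vec_coords mat_coords (\<lambda>x. 1) companion"
  by (rule rat_map_mat2I; unfold companion_def matrix2_nth; rule rat_fun_of_polyfun;
      (rule polyfun.const | rule polyfun_vec_nth | rule polyfun_uminus, rule polyfun_vec_nth))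

lemma surj_Inv: "surj Inv"
  by (rule surjI[of _ companion]) simp

lemma dominant_Inv: "dominant mat_coords vec_coords (\<lambda>x. 1) Inv"
  by (rule dominant_if_surj[OF polymap_Inv surj_Inv])

lemma generically_mat_nth_nonzero: "generically mat_coords (\<lambda>M. M$2$1 \<noteq> 0)"
  by (rule generically_nonzero[OF polyfun_mat_nth, where x="matrix2 0 0 1 0"]) simp

lemma rat_map_pencil_Inv:
  assumes "polyfun vec_coords E" "rat_fun vec_coords E a" "rat_fun vec_coords E b"
  shows "rat_map vec_coords vec_coords E (\<lambda>y. pencil_Inv (a y) (b y) y)"
proof (rule rat_map_vec2I; unfold pencil_Inv_nth)
  have y: "rat_fun vec_coords E (\<lambda>y. y$i)" for i by (rule rat_fun_of_polyfun[OF polyfun_vec_nth])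
  show "rat_fun vec_coords E (\<lambda>y. 2 * a y + b y * y $ 1)"
    by (intro rat_fun_add[OF assms(1)] rat_fun_mult[OF rat_fun_const assms(2)] rat_fun_mult[OF assms(3) y])
  show "rat_fun vec_coords E (\<lambda>y. (a y)\<^sup>2 + a y * b y * y $ 1 + (b y)\<^sup>2 * y $ 2)"
    by (intro rat_fun_add[OF assms(1)] rat_fun_mult[OF rat_fun_mult[OF assms(2,3)] y]
        rat_fun_mult[OF rat_fun_power[OF assms(3)] y] rat_fun_power[OF assms(2)])
qed

lemma rat_map_pencil_inverse:
  assumes "polyfun mat_coords D0" "rat_map mat_coords vec_coords D0 Y"
    "polyfun vec_coords E" "rat_fun vec_coords E a" "rat_fun vec_coords E b"
  obtains D where "polyfun mat_coords D" "\<And>N. D N \<noteq> 0 \<longleftrightarrow> D0 N \<noteq> 0 \<and> E (Y N) \<noteq> 0 \<and> b (Y N) \<noteq> 0"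
    "rat_map mat_coords mat_coords D (\<lambda>N. pencil (- a (Y N) / b (Y N)) (1 / b (Y N)) N)"
proof -
  obtain D1 where D1: "polyfun mat_coords D1" "\<And>N. D1 N \<noteq> 0 \<longleftrightarrow> D0 N \<noteq> 0 \<and> E (Y N) \<noteq> 0"
    "\<And>h. rat_fun mat_coords D0 h \<Longrightarrow> rat_fun mat_coords D1 h"
    "\<And>g. rat_fun vec_coords E g \<Longrightarrow> rat_fun mat_coords D1 (\<lambda>N. g (Y N))"
    by (rule rat_fun_compose_den[OF assms(1-3)]) (rule that)
  obtain D where D: "polyfun mat_coords D" "\<And>N. D N \<noteq> 0 \<longleftrightarrow> D1 N \<noteq> 0 \<and> b (Y N) \<noteq> 0"
    "\<And>h. rat_fun mat_coords D1 h \<Longrightarrow> rat_fun mat_coords D h"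
    and inv_b: "rat_fun mat_coords D (\<lambda>N. 1 / b (Y N))"
    by (rule rat_fun_inverse_den[OF D1(1) D1(4)[OF assms(5)]]) (rule that)
  have a: "rat_fun mat_coords D (\<lambda>N. - a (Y N) / b (Y N))"
    using rat_fun_mult[OF rat_fun_uminus[OF D(3)[OF D1(4)[OF assms(4)]]] inv_b] by simp
  have entry: "rat_fun mat_coords D (\<lambda>N. N$i$j)" for i j
    by (rule rat_fun_of_polyfun[OF polyfun_mat_nth])
  show ?thesis
  proof (rule that[OF D(1)])
    show "D N \<noteq> 0 \<longleftrightarrow> D0 N \<noteq> 0 \<and> E (Y N) \<noteq> 0 \<and> b (Y N) \<noteq> 0" for N
      using D(2) D1(2) by auto
    show "rat_map mat_coords mat_coords D (\<lambda>N. pencil (- a (Y N) / b (Y N)) (1 / b (Y N)) N)"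
      by (rule rat_map_mat2I; unfold pencil_def matrix2_nth;
          intro rat_fun_add[OF D(1)] rat_fun_mult[OF inv_b entry] a)
  qed
qed

lemma rat_map_vec_eq_id_if_generically_Inv:
  assumes "polyfun vec_coords D" "rat_map vec_coords vec_coords D f"
    "generically mat_coords (\<lambda>M. D (Inv M) \<noteq> 0 \<and> f (Inv M) = Inv M)"
  shows "generically vec_coords (\<lambda>y. D y \<noteq> 0 \<and> f y = y)"
proof -
  obtain M where "D (Inv M) \<noteq> 0" using generically_ex[OF assms(3)] by blast
  then have "generically vec_coords (\<lambda>y. D y \<noteq> 0)" by (rule generically_nonzero[OF assms(1)])
  moreover have "f y = y" if "D y \<noteq> 0" for y
    by (rule rat_map_eq_if_generically_eq[OF affine_lines_mat vec_eqI_coords assms(1,1,2)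
          rat_map_id polymap_Inv surj_Inv _ that that])
      (use assms(3) in \<open>auto elim: generically_mono\<close>)
  ultimately show ?thesis by (auto elim: generically_mono)
qed

section \<open>Maps compatible with conjugation\<close>

lemma compatible_with_conjugationD:
  assumes \<Phi>: "rational_map mat_coords mat_coords \<Phi> q" and "compatible_with_conjugation \<Phi>"
    and A: "invertible A" and "q M \<noteq> 0" "q (A ** M ** matrix_inv A) \<noteq> 0"
  shows "A ** \<Phi> M ** matrix_inv A = \<Phi> (A ** M ** matrix_inv A)"
proof -
  define B where "B = matrix_inv A"
  note q = rational_mapD[OF \<Phi>]
  have conj: "rat_map mat_coords mat_coords (\<lambda>x. 1) (\<lambda>M. A ** M ** B)" by (rule polymap_conj)
  have q_conj: "polyfun mat_coords (\<lambda>M. q (A ** M ** B))" by (rule polyfun_compose[OF conj q(2)])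
  obtain M0 where "q M0 \<noteq> 0" using q(3) by blast
  moreover have "A ** (B ** M0 ** A) ** B = M0"
    using matrix_inv_inverse[OF A] unfolding B_def
    by (metis matrix_mult_cancel_left matrix_mult_cancel_right matrix_mul_assoc)
  ultimately have "generically mat_coords (\<lambda>M. q (A ** M ** B) \<noteq> 0)"
    using generically_nonzero[OF q_conj, of "B ** M0 ** A"] by simp
  moreover have "generically mat_coords (\<lambda>M. A ** \<Phi> M ** B = \<Phi> (A ** M ** B))"
    using assms(2) A unfolding compatible_with_conjugation_def B_def by blast
  ultimately have "generically mat_coords
      (\<lambda>M. q M \<noteq> 0 \<and> q (A ** M ** B) \<noteq> 0 \<and> A ** \<Phi> M ** B = \<Phi> (A ** M ** B))"
    by (intro generically_conj[OF affine_lines_mat] generically_nonzero[OF q(2) \<open>q M0 \<noteq> 0\<close>])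
  then show ?thesis unfolding B_def[symmetric]
    by (intro rat_map_eq_if_generically_eq[OF affine_lines_mat mat_eqI_coords q(2) q_conj
          rat_map_postcompose_polymap[OF q(2,1) conj] rat_map_precompose_polymap[OF conj q(1)]
          rat_map_id]) (use assms(4,5) in \<open>simp_all add: B_def surj_def\<close>)
qed

lemma compatible_with_conjugation_commutes:
  assumes "rational_map mat_coords mat_coords \<Phi> q" "compatible_with_conjugation \<Phi>" "q G \<noteq> 0"
  shows "G ** \<Phi> G = \<Phi> G ** G"
proof -
  obtain c where inv: "invertible (G + matrix2 c 0 0 c)" (is "invertible ?H")
    by (rule exists_shift_invertible)
  have "?H ** G ** matrix_inv ?H = G"
    unfolding shift_commute by (rule matrix_mult_cancel_right[OF matrix_inv_inverse(1)[OF inv]])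
  then have "?H ** \<Phi> G ** matrix_inv ?H = \<Phi> G"
    using compatible_with_conjugationD[OF assms(1,2) inv assms(3)] assms(3) by simp
  then have "?H ** \<Phi> G = \<Phi> G ** ?H"
    by (metis matrix_mult_cancel_right matrix_inv_inverse(2) inv)
  then show ?thesis by (rule commute_if_shift_commute)
qed

text \<open>Knowing \<open>\<Phi>\<close> at one matrix \<open>G\<close> determines it on the whole (regular) similarity class of \<open>G\<close>.\<close>

lemma compatible_with_conjugation_pencil:
  assumes "rational_map mat_coords mat_coords \<Phi> q" "compatible_with_conjugation \<Phi>"
    and "q G \<noteq> 0" "G$2$1 \<noteq> 0" "q M \<noteq> 0" "M$2$1 \<noteq> 0" "Inv G = Inv M"
  shows "\<Phi> M = pencil (\<Phi> G$1$1 - \<Phi> G$2$1 / G$2$1 * G$1$1) (\<Phi> G$2$1 / G$2$1) M"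
    (is "_ = pencil ?a ?b M")
proof -
  obtain X where X: "invertible X" "X ** G ** matrix_inv X = M"
    by (rule similar_if_same_Inv[OF assms(6,4,7)])
  have "\<Phi> M = X ** \<Phi> G ** matrix_inv X"
    using compatible_with_conjugationD[OF assms(1,2) X(1) assms(3)] X(2) assms(5) by simp
  also have "\<Phi> G = pencil ?a ?b G"
    by (rule commuting_eq_pencil[OF assms(4) compatible_with_conjugation_commutes[OF assms(1-3)]])
  also have "X ** pencil ?a ?b G ** matrix_inv X = pencil ?a ?b M"
    using conj_pencil[OF matrix_inv_inverse(1)[OF X(1)]] X(2) by simp
  finally show ?thesis .
qed

text \<open>\<open>\<Phi> M = a(Inv M) \<one> + b(Inv M) M\<close> on a nonempty Zariski open set, with \<open>a\<close> and \<open>b\<close>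
  regular on \<open>{E \<noteq> 0}\<close>.\<close>

definition pencil_form ::
  "(mat2 \<Rightarrow> complex) \<Rightarrow> (mat2 \<Rightarrow> mat2) \<Rightarrow> (vec2 \<Rightarrow> complex) \<Rightarrow> (vec2 \<Rightarrow> complex) \<Rightarrow>
     (vec2 \<Rightarrow> complex) \<Rightarrow> bool" where
  "pencil_form q \<Phi> E a b \<longleftrightarrow>
     polyfun vec_coords E \<and> (\<exists>y. E y \<noteq> 0) \<and> rat_fun vec_coords E a \<and> rat_fun vec_coords E b \<and>
     (\<forall>M. q M \<noteq> 0 \<and> M$2$1 \<noteq> 0 \<and> E (Inv M) \<noteq> 0 \<longrightarrow> \<Phi> M = pencil (a (Inv M)) (b (Inv M)) M)"

lemma pencil_formD:
  assumes "pencil_form q \<Phi> E a b"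
  shows "polyfun vec_coords E" "rat_fun vec_coords E a" "rat_fun vec_coords E b"
    "generically vec_coords (\<lambda>y. E y \<noteq> 0)"
    "q M \<noteq> 0 \<Longrightarrow> M$2$1 \<noteq> 0 \<Longrightarrow> E (Inv M) \<noteq> 0 \<Longrightarrow> \<Phi> M = pencil (a (Inv M)) (b (Inv M)) M"
  using assms generically_nonzero[of vec_coords E] unfolding pencil_form_def by blast+

text \<open>The coefficients are read off along the section \<open>\<Gamma>\<close> of \<open>Inv\<close>, a conjugate of the companion
  matrix passing through a point where \<open>q\<close> does not vanish.\<close>

lemma compatible_with_conjugation_pencil_form:
  assumes \<Phi>: "rational_map mat_coords mat_coords \<Phi> q" "compatible_with_conjugation \<Phi>"
  obtains E a b where "pencil_form q \<Phi> E a b"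
proof -
  note q = rational_mapD[OF \<Phi>(1)]
  obtain M0 where "q M0 \<noteq> 0" using q(3) by blast
  then obtain M1 where M1: "q M1 \<noteq> 0" "M1$2$1 \<noteq> 0"
    using polyfun_common_nonzero[OF affine_lines_mat q(2) polyfun_mat_nth[of 2 1] \<open>q M0 \<noteq> 0\<close>,
        where y="matrix2 0 0 1 0"] by auto
  define K where "K = krylov M1"
  define \<Gamma> where "\<Gamma> y = K ** companion y ** matrix_inv K" for y
  have \<Gamma>: "rat_map vec_coords mat_coords (\<lambda>x. 1) \<Gamma>"
    unfolding \<Gamma>_def by (rule rat_map_postcompose_polymap[OF polyfun.const polymap_companion polymap_conj])
  have \<Gamma>_M1: "\<Gamma> (Inv M1) = M1"
    unfolding \<Gamma>_def K_def using krylov_conj_companion[OF M1(2)] by simp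
  have Inv_\<Gamma>: "Inv (\<Gamma> y) = y" for y
    unfolding \<Gamma>_def using Inv_conj[OF invertible_krylov[OF M1(2)]] K_def by simp
  have \<Gamma>_nth: "polyfun vec_coords (\<lambda>y. \<Gamma> y $ i $ j)" for i j by (rule polyfun_compose[OF \<Gamma> polyfun_mat_nth])
  have \<Phi>\<Gamma>: "rat_map vec_coords mat_coords (\<lambda>y. q (\<Gamma> y)) (\<lambda>y. \<Phi> (\<Gamma> y))"
    by (rule rat_map_precompose_polymap[OF \<Gamma> q(1)])
  obtain E where E: "polyfun vec_coords E" "\<And>y. E y \<noteq> 0 \<longleftrightarrow> q (\<Gamma> y) \<noteq> 0 \<and> \<Gamma> y $ 2 $ 1 \<noteq> 0"
    "\<And>h. rat_fun vec_coords (\<lambda>y. q (\<Gamma> y)) h \<Longrightarrow> rat_fun vec_coords E h"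
    and inv: "rat_fun vec_coords E (\<lambda>y. 1 / \<Gamma> y $ 2 $ 1)"
    by (rule rat_fun_inverse_den[OF polyfun_compose[OF \<Gamma> q(2)] rat_fun_of_polyfun[OF \<Gamma>_nth[of 2 1]]]) (rule that)
  define b where "b y = \<Phi> (\<Gamma> y) $ 2 $ 1 / \<Gamma> y $ 2 $ 1" for y
  define a where "a y = \<Phi> (\<Gamma> y) $ 1 $ 1 - b y * \<Gamma> y $ 1 $ 1" for y
  have b: "rat_fun vec_coords E b"
    using rat_fun_mult[OF E(3)[OF rat_map_matD[OF \<Phi>\<Gamma>]] inv] unfolding b_def by simp
  have a: "rat_fun vec_coords E a"
    unfolding a_def
    by (intro rat_fun_diff[OF E(1)] rat_fun_mult[OF b] E(3)[OF rat_map_matD[OF \<Phi>\<Gamma>]]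
        rat_fun_of_polyfun[OF \<Gamma>_nth])
  have "\<Phi> M = pencil (a (Inv M)) (b (Inv M)) M"
    if "q M \<noteq> 0" "M$2$1 \<noteq> 0" "E (Inv M) \<noteq> 0" for M
    using compatible_with_conjugation_pencil[OF \<Phi> _ _ that(1,2) Inv_\<Gamma>] that(3)
    unfolding E(2) a_def b_def by blast
  moreover have "E (Inv M1) \<noteq> 0" unfolding E(2) \<Gamma>_M1 using M1 by simp
  ultimately show ?thesis
    using that E(1) a b unfolding pencil_form_def by blast
qed

lemma compatible_with_conjugation_inverse:
  assumes \<Phi>: "rational_map mat_coords mat_coords \<Phi> q" "compatible_with_conjugation \<Phi>"
    and P: "rational_map mat_coords mat_coords P qP"
    and left: "generically mat_coords (\<lambda>M. q M \<noteq> 0 \<and> qP (\<Phi> M) \<noteq> 0 \<and> P (\<Phi> M) = M)"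
    and right: "generically mat_coords (\<lambda>N. qP N \<noteq> 0 \<and> q (P N) \<noteq> 0 \<and> \<Phi> (P N) = N)"
  shows "compatible_with_conjugation P"
  unfolding compatible_with_conjugation_def
proof (intro allI impI)
  fix A :: mat2 assume A: "invertible A"
  define B where "B = matrix_inv A"
  have AB: "A ** B = mat 1" "B ** A = mat 1" unfolding B_def by (rule matrix_inv_inverse[OF A])+
  have "dominant mat_coords mat_coords (\<lambda>x. 1) (\<lambda>M. A ** M ** B)"
    by (rule dominant_if_surj[OF polymap_conj], rule surjI[where f="\<lambda>M. B ** M ** A"])
      (simp add: matrix_mul_assoc AB matrix_mult_cancel_right[OF AB(1)])
  from generically_compose[OF this left]
  have "generically mat_coords (\<lambda>M. q (A ** M ** B) \<noteq> 0 \<and> P (\<Phi> (A ** M ** B)) = A ** M ** B)"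
    by (rule generically_mono) simp
  moreover have "dominant mat_coords mat_coords qP P"
    by (rule dominant_if_right_inverse[OF affine_lines_mat rational_mapD(2,1)[OF P], where g=\<Phi>],
        rule generically_mono[OF left]) simp
  ultimately have "generically mat_coords
      (\<lambda>N. q (A ** P N ** B) \<noteq> 0 \<and> P (\<Phi> (A ** P N ** B)) = A ** P N ** B)"
    by (rule generically_compose[rotated])
  then show "generically mat_coords (\<lambda>N. A ** P N ** matrix_inv A = P (A ** N ** matrix_inv A))"
    unfolding B_def[symmetric]
  proof (rule generically_mono[OF generically_conj[OF affine_lines_mat right]])
    fix N assume N: "(qP N \<noteq> 0 \<and> q (P N) \<noteq> 0 \<and> \<Phi> (P N) = N) \<and>
      q (A ** P N ** B) \<noteq> 0 \<and> P (\<Phi> (A ** P N ** B)) = A ** P N ** B"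
    then have "A ** N ** B = \<Phi> (A ** P N ** B)"
      using compatible_with_conjugationD[OF \<Phi> A, of "P N"] unfolding B_def by simp
    then show "A ** P N ** B = P (A ** N ** B)" using N by simp
  qed
qed

section \<open>The induced map on invariants\<close>

locale Sq_of =
  fixes \<Phi> :: "mat2 \<Rightarrow> mat2" and q :: "mat2 \<Rightarrow> complex"
    and S :: "vec2 \<Rightarrow> vec2" and qS :: "vec2 \<Rightarrow> complex"
  assumes Phi_rational: "rational_map mat_coords mat_coords \<Phi> q"
    and Phi_compatible: "compatible_with_conjugation \<Phi>"
    and S_rational: "rational_map vec_coords vec_coords S qS"
    and Inv_Phi_generically:
      "generically mat_coords (\<lambda>M. q M \<noteq> 0 \<and> qS (Inv M) \<noteq> 0 \<and> Inv (\<Phi> M) = S (Inv M))"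
begin

lemmas q = rational_mapD[OF Phi_rational] and qS = rational_mapD[OF S_rational]

lemma generically_qS_Inv: "generically mat_coords (\<lambda>M. qS (Inv M) \<noteq> 0)"
proof -
  obtain y where "qS y \<noteq> 0" using qS(3) by blast
  then show ?thesis by (rule generically_compose[OF dominant_Inv generically_nonzero[OF qS(2)]])
qed

lemma Inv_Phi:
  assumes "q M \<noteq> 0" "qS (Inv M) \<noteq> 0"
  shows "Inv (\<Phi> M) = S (Inv M)"
  by (rule rat_map_eq_if_generically_eq[OF affine_lines_mat vec_eqI_coords q(2)
        polyfun_compose[OF polymap_Inv qS(2)] rat_map_postcompose_polymap[OF q(2,1) polymap_Inv]
        rat_map_precompose_polymap[OF polymap_Inv qS(1)] rat_map_id surj_id[unfolded id_def]
        Inv_Phi_generically assms])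

lemma S_eq_pencil_Inv:
  assumes pf: "pencil_form q \<Phi> E a b" and "qS y \<noteq> 0" "E y \<noteq> 0"
  shows "S y = pencil_Inv (a y) (b y) y"
proof -
  note E = pencil_formD[OF pf]
  obtain M0 where "q M0 \<noteq> 0" using q(3) by blast
  have "generically mat_coords
      (\<lambda>M. q M \<noteq> 0 \<and> M$2$1 \<noteq> 0 \<and> E (Inv M) \<noteq> 0 \<and> qS (Inv M) \<noteq> 0)"
    by (intro generically_conj[OF affine_lines_mat] generically_nonzero[OF q(2) \<open>q M0 \<noteq> 0\<close>]
        generically_mat_nth_nonzero generically_qS_Inv generically_compose[OF dominant_Inv E(4)])
  then have "generically mat_coords (\<lambda>M. qS (Inv M) \<noteq> 0 \<and> E (Inv M) \<noteq> 0 \<and>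
      S (Inv M) = pencil_Inv (a (Inv M)) (b (Inv M)) (Inv M))"
    by (rule generically_mono) (auto simp: Inv_Phi[symmetric] E(5) Inv_pencil)
  from rat_map_eq_if_generically_eq[OF affine_lines_mat vec_eqI_coords qS(2) E(1) qS(1)
      rat_map_pencil_Inv[OF E(1-3)] polymap_Inv surj_Inv this assms(2,3)]
  show ?thesis .
qed

lemma pencil_form_coeff_nonzero:
  assumes pf: "pencil_form q \<Phi> E a b" and dom: "dominant vec_coords vec_coords qS S"
  obtains y where "E y \<noteq> 0" "b y \<noteq> 0"
proof -
  have "\<exists>y. E y \<noteq> 0 \<and> b y \<noteq> 0"
  proof (rule ccontr)
    assume "\<nexists>y. E y \<noteq> 0 \<and> b y \<noteq> 0"
    then have b0: "b y = 0" if "E y \<noteq> 0" for y using that by blast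
    define W where "W y = y$1 ^ 2 - 4 * y$2" for y :: vec2
    have "polyfun vec_coords W" unfolding W_def
      by (intro polyfun_diff polyfun_power polyfun_cmult polyfun_vec_nth)
    moreover have "W (vector [0, 1]) \<noteq> 0" unfolding W_def by simp
    ultimately have "generically vec_coords (\<lambda>y. W y \<noteq> 0)" by (rule generically_nonzero)
    then have "generically vec_coords (\<lambda>y. (qS y \<noteq> 0 \<and> W (S y) \<noteq> 0) \<and> E y \<noteq> 0)"
      by (intro generically_conj[OF affine_lines_vec] generically_pullback[OF dom]
          pencil_formD(4)[OF pf])
    then obtain y where y: "qS y \<noteq> 0" "W (S y) \<noteq> 0" "E y \<noteq> 0" using generically_ex by blast
    have "S y = pencil_Inv (a y) 0 y" using S_eq_pencil_Inv[OF pf y(1,3)] b0[OF y(3)] by simp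
    then have "W (S y) = 0" unfolding W_def by (simp add: power2_eq_square)
    with y(2) show False by contradiction
  qed
  then show ?thesis using that by blast
qed

lemma Phi_pencil_inverse:
  assumes pf: "pencil_form q \<Phi> E a b"
    and "E y \<noteq> 0" "b y \<noteq> 0" "qS y \<noteq> 0" "S y = Inv N" "N$2$1 \<noteq> 0"
    and "q (pencil (- a y / b y) (1 / b y) N) \<noteq> 0"
  shows "\<Phi> (pencil (- a y / b y) (1 / b y) N) = N"
proof -
  let ?M = "pencil (- a y / b y) (1 / b y) N"
  have "Inv ?M = y"
    using Inv_pencil_inverse[OF assms(3)] S_eq_pencil_Inv[OF pf assms(4,2)] assms(5) by simp
  moreover have "?M$2$1 \<noteq> 0" using assms(3,6) by (simp add: pencil_def)
  ultimately have "\<Phi> ?M = pencil (a y) (b y) ?M"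
    using pencil_formD(5)[OF pf] assms(2,7) by auto
  then show ?thesis using pencil_inverse_right[OF assms(3)] by simp
qed

lemma Sq_right_inverse:
  assumes P: "rational_map mat_coords mat_coords P qP" "dominant mat_coords mat_coords qP P"
    and right: "generically mat_coords (\<lambda>N. qP N \<noteq> 0 \<and> q (P N) \<noteq> 0 \<and> \<Phi> (P N) = N)"
    and pf: "pencil_form qP P E c e"
  shows "generically vec_coords
    (\<lambda>y. E y \<noteq> 0 \<and> qS (pencil_Inv (c y) (e y) y) \<noteq> 0 \<and> S (pencil_Inv (c y) (e y) y) = y)"
proof -
  define T where "T y = pencil_Inv (c y) (e y) y" for y
  note E = pencil_formD[OF pf]
  have T: "rat_map vec_coords vec_coords E T" unfolding T_def by (rule rat_map_pencil_Inv[OF E(1-3)])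
  obtain D where D: "polyfun vec_coords D" "\<And>y. D y \<noteq> 0 \<longleftrightarrow> E y \<noteq> 0 \<and> qS (T y) \<noteq> 0"
    "\<And>h. rat_fun vec_coords E h \<Longrightarrow> rat_fun vec_coords D h"
    "\<And>g. rat_fun vec_coords qS g \<Longrightarrow> rat_fun vec_coords D (\<lambda>y. g (T y))"
    by (rule rat_fun_compose_den[OF E(1) T qS(2)]) (rule that)
  have "generically mat_coords (\<lambda>N. (qP N \<noteq> 0 \<and> q (P N) \<noteq> 0 \<and> \<Phi> (P N) = N) \<and>
      N$2$1 \<noteq> 0 \<and> E (Inv N) \<noteq> 0 \<and> qS (Inv (P N)) \<noteq> 0)"
    by (intro generically_conj[OF affine_lines_mat] right generically_mat_nth_nonzero
        generically_compose[OF dominant_Inv E(4)] generically_compose[OF P(2) generically_qS_Inv])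
  then have "generically mat_coords (\<lambda>N. D (Inv N) \<noteq> 0 \<and> S (T (Inv N)) = Inv N)"
  proof (rule generically_mono)
    fix N assume N: "(qP N \<noteq> 0 \<and> q (P N) \<noteq> 0 \<and> \<Phi> (P N) = N) \<and>
      N$2$1 \<noteq> 0 \<and> E (Inv N) \<noteq> 0 \<and> qS (Inv (P N)) \<noteq> 0"
    then have "Inv (P N) = T (Inv N)" by (simp add: E(5) Inv_pencil T_def)
    with N show "D (Inv N) \<noteq> 0 \<and> S (T (Inv N)) = Inv N"
      using Inv_Phi[of "P N"] by (simp add: D(2))
  qed
  from rat_map_vec_eq_id_if_generically_Inv[OF D(1) rat_map_compose_of_rat_fun[OF D(4) qS(1)] this]
  show ?thesis unfolding T_def[symmetric]
  proof (rule generically_mono)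
    fix y assume "D y \<noteq> 0 \<and> S (T y) = y"
    then show "E y \<noteq> 0 \<and> qS (T y) \<noteq> 0 \<and> S (T y) = y" using D(2)[of y] by blast
  qed
qed

lemma Sq_left_inverse:
  assumes dom: "dominant mat_coords mat_coords q \<Phi>"
    and left: "generically mat_coords (\<lambda>M. q M \<noteq> 0 \<and> qP (\<Phi> M) \<noteq> 0 \<and> P (\<Phi> M) = M)"
    and pf: "pencil_form qP P E c e"
  shows "generically vec_coords
    (\<lambda>x. qS x \<noteq> 0 \<and> E (S x) \<noteq> 0 \<and> pencil_Inv (c (S x)) (e (S x)) (S x) = x)"
proof -
  define T where "T y = pencil_Inv (c y) (e y) y" for y
  note E = pencil_formD[OF pf]
  have T: "rat_map vec_coords vec_coords E T" unfolding T_def by (rule rat_map_pencil_Inv[OF E(1-3)])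
  obtain D where D: "polyfun vec_coords D" "\<And>x. D x \<noteq> 0 \<longleftrightarrow> qS x \<noteq> 0 \<and> E (S x) \<noteq> 0"
    "\<And>h. rat_fun vec_coords qS h \<Longrightarrow> rat_fun vec_coords D h"
    "\<And>g. rat_fun vec_coords E g \<Longrightarrow> rat_fun vec_coords D (\<lambda>x. g (S x))"
    by (rule rat_fun_compose_den[OF qS(2,1) E(1)]) (rule that)
  have "generically mat_coords (\<lambda>M. (q M \<noteq> 0 \<and> qP (\<Phi> M) \<noteq> 0 \<and> P (\<Phi> M) = M) \<and>
      qS (Inv M) \<noteq> 0 \<and> \<Phi> M $ 2 $ 1 \<noteq> 0 \<and> E (Inv (\<Phi> M)) \<noteq> 0)"
    by (intro generically_conj[OF affine_lines_mat] left generically_qS_Inv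
        generically_compose[OF dom generically_conj[OF affine_lines_mat generically_mat_nth_nonzero
          generically_compose[OF dominant_Inv E(4)]]])
  then have "generically mat_coords (\<lambda>M. D (Inv M) \<noteq> 0 \<and> T (S (Inv M)) = Inv M)"
  proof (rule generically_mono)
    fix M assume M: "(q M \<noteq> 0 \<and> qP (\<Phi> M) \<noteq> 0 \<and> P (\<Phi> M) = M) \<and>
      qS (Inv M) \<noteq> 0 \<and> \<Phi> M $ 2 $ 1 \<noteq> 0 \<and> E (Inv (\<Phi> M)) \<noteq> 0"
    then have Inv_\<Phi>: "Inv (\<Phi> M) = S (Inv M)" by (simp add: Inv_Phi)
    have "Inv M = Inv (P (\<Phi> M))" using M by simp
    also have "\<dots> = Inv (pencil (c (Inv (\<Phi> M))) (e (Inv (\<Phi> M))) (\<Phi> M))"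
      by (subst E(5)) (use M in auto)
    also have "\<dots> = T (S (Inv M))" by (simp only: Inv_pencil T_def Inv_\<Phi>)
    finally have "T (S (Inv M)) = Inv M" by (rule sym)
    then show "D (Inv M) \<noteq> 0 \<and> T (S (Inv M)) = Inv M" using M Inv_\<Phi> by (simp add: D(2))
  qed
  from rat_map_vec_eq_id_if_generically_Inv[OF D(1) rat_map_compose_of_rat_fun[OF D(4) T] this]
  show ?thesis unfolding T_def[symmetric]
  proof (rule generically_mono)
    fix x assume "D x \<noteq> 0 \<and> T (S x) = x"
    then show "qS x \<noteq> 0 \<and> E (S x) \<noteq> 0 \<and> T (S x) = x" using D(2)[of x] by blast
  qed
qed

lemma birational_S_if_birational_Phi:
  assumes "birational mat_coords mat_coords \<Phi> q"
  shows "birational vec_coords vec_coords S qS"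
proof -
  obtain P qP where P: "rational_map mat_coords mat_coords P qP"
    and left: "generically mat_coords (\<lambda>M. q M \<noteq> 0 \<and> qP (\<Phi> M) \<noteq> 0 \<and> P (\<Phi> M) = M)"
    and right: "generically mat_coords (\<lambda>N. qP N \<noteq> 0 \<and> q (P N) \<noteq> 0 \<and> \<Phi> (P N) = N)"
    using assms unfolding birational_def by blast
  have dom_\<Phi>: "dominant mat_coords mat_coords q \<Phi>"
    by (rule dominant_if_right_inverse[OF affine_lines_mat q(2,1), where g=P],
        rule generically_mono[OF right]) simp
  have dom_P: "dominant mat_coords mat_coords qP P"
    by (rule dominant_if_right_inverse[OF affine_lines_mat rational_mapD(2,1)[OF P], where g=\<Phi>],
        rule generically_mono[OF left]) simp
  obtain E c e where pf: "pencil_form qP P E c e"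
    by (rule compatible_with_conjugation_pencil_form[OF P
          compatible_with_conjugation_inverse[OF Phi_rational Phi_compatible P left right]])
  note E = pencil_formD[OF pf]
  obtain y0 where "E y0 \<noteq> 0" using generically_ex[OF E(4)] by blast
  then obtain n
    where "rational_map vec_coords vec_coords (\<lambda>y. pencil_Inv (c y) (e y) y) (\<lambda>y. E y ^ n)"
    by (rule rational_map_if_rat_map[OF finite_vec_coords E(1) _ rat_map_pencil_Inv[OF E(1-3)]])
  then show ?thesis unfolding birational_def
  proof (intro exI[of _ "\<lambda>y. pencil_Inv (c y) (e y) y"] exI[of _ "\<lambda>y. E y ^ n"] conjI)
    show "generically vec_coords (\<lambda>x. qS x \<noteq> 0 \<and> E (S x) ^ n \<noteq> 0 \<and>
        pencil_Inv (c (S x)) (e (S x)) (S x) = x)"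
      by (rule generically_mono[OF Sq_left_inverse[OF dom_\<Phi> left pf]]) simp
    show "generically vec_coords (\<lambda>y. E y ^ n \<noteq> 0 \<and> qS (pencil_Inv (c y) (e y) y) \<noteq> 0 \<and>
        S (pencil_Inv (c y) (e y) y) = y)"
      by (rule generically_mono[OF Sq_right_inverse[OF P dom_P right pf]]) simp
  qed
qed

text \<open>If \<open>\<Phi> M = a(Inv M) \<one> + b(Inv M) M\<close> and \<open>T\<close> inverts \<open>S\<close>, then \<open>M\<close> is recovered from
  \<open>N = \<Phi> M\<close> by solving this equation, since \<open>Inv M = T (Inv N)\<close>.\<close>

definition pencil_inverse_map ::
  "(vec2 \<Rightarrow> complex) \<Rightarrow> (vec2 \<Rightarrow> complex) \<Rightarrow> (vec2 \<Rightarrow> vec2) \<Rightarrow> mat2 \<Rightarrow> mat2" where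
  "pencil_inverse_map a b T = (\<lambda>N. pencil (- a (T (Inv N)) / b (T (Inv N))) (1 / b (T (Inv N))) N)"

lemma pencil_inverse_map_Phi:
  assumes pf: "pencil_form q \<Phi> E a b"
    and Eb: "generically vec_coords (\<lambda>y. E y \<noteq> 0 \<and> b y \<noteq> 0)"
    and left: "generically vec_coords (\<lambda>x. qS x \<noteq> 0 \<and> qT (S x) \<noteq> 0 \<and> T (S x) = x)"
    and D: "\<And>N. D N \<noteq> 0 \<longleftrightarrow> qT (Inv N) \<noteq> 0 \<and> E (T (Inv N)) \<noteq> 0 \<and> b (T (Inv N)) \<noteq> 0"
  shows "generically mat_coords (\<lambda>M. q M \<noteq> 0 \<and> D (\<Phi> M) \<noteq> 0 \<and> pencil_inverse_map a b T (\<Phi> M) = M)"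
proof -
  obtain M0 where "q M0 \<noteq> 0" using q(3) by blast
  have "generically mat_coords (\<lambda>M. q M \<noteq> 0 \<and> M$2$1 \<noteq> 0 \<and> (E (Inv M) \<noteq> 0 \<and> b (Inv M) \<noteq> 0) \<and>
      qS (Inv M) \<noteq> 0 \<and> qT (S (Inv M)) \<noteq> 0 \<and> T (S (Inv M)) = Inv M)"
    by (intro generically_conj[OF affine_lines_mat] generically_nonzero[OF q(2) \<open>q M0 \<noteq> 0\<close>]
        generically_mat_nth_nonzero generically_compose[OF dominant_Inv left]
        generically_compose[OF dominant_Inv Eb])
  then show ?thesis
  proof (rule generically_mono)
    fix M assume M: "q M \<noteq> 0 \<and> M$2$1 \<noteq> 0 \<and> (E (Inv M) \<noteq> 0 \<and> b (Inv M) \<noteq> 0) \<and>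
      qS (Inv M) \<noteq> 0 \<and> qT (S (Inv M)) \<noteq> 0 \<and> T (S (Inv M)) = Inv M"
    then have \<Phi>_M: "\<Phi> M = pencil (a (Inv M)) (b (Inv M)) M" by (simp add: pencil_formD(5)[OF pf])
    have Inv_\<Phi>: "Inv (\<Phi> M) = S (Inv M)" using M by (simp add: Inv_Phi)
    with M have T_\<Phi>: "T (Inv (\<Phi> M)) = Inv M" by simp
    have "pencil_inverse_map a b T (\<Phi> M) = M"
      unfolding pencil_inverse_map_def T_\<Phi> unfolding \<Phi>_M
      by (rule pencil_inverse_left) (use M in simp)
    then show "q M \<noteq> 0 \<and> D (\<Phi> M) \<noteq> 0 \<and> pencil_inverse_map a b T (\<Phi> M) = M"
      using M by (simp add: D Inv_\<Phi> T_\<Phi>)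
  qed
qed

lemma Phi_pencil_inverse_map:
  assumes pf: "pencil_form q \<Phi> E a b"
    and right: "generically vec_coords (\<lambda>y. qT y \<noteq> 0 \<and> qS (T y) \<noteq> 0 \<and> S (T y) = y)"
    and D: "\<And>N. D N \<noteq> 0 \<longleftrightarrow> qT (Inv N) \<noteq> 0 \<and> E (T (Inv N)) \<noteq> 0 \<and> b (T (Inv N)) \<noteq> 0"
    and q_\<Psi>: "generically mat_coords (\<lambda>N. D N \<noteq> 0 \<and> q (pencil_inverse_map a b T N) \<noteq> 0)"
  shows "generically mat_coords (\<lambda>N. D N \<noteq> 0 \<and> q (pencil_inverse_map a b T N) \<noteq> 0 \<and>
    \<Phi> (pencil_inverse_map a b T N) = N)"
proof -
  have "generically mat_coords (\<lambda>N. (D N \<noteq> 0 \<and> q (pencil_inverse_map a b T N) \<noteq> 0) \<and>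
      N$2$1 \<noteq> 0 \<and> qT (Inv N) \<noteq> 0 \<and> qS (T (Inv N)) \<noteq> 0 \<and> S (T (Inv N)) = Inv N)"
    by (intro generically_conj[OF affine_lines_mat] q_\<Psi> generically_mat_nth_nonzero
        generically_compose[OF dominant_Inv right])
  then show ?thesis
  proof (rule generically_mono)
    fix N assume N: "(D N \<noteq> 0 \<and> q (pencil_inverse_map a b T N) \<noteq> 0) \<and>
      N$2$1 \<noteq> 0 \<and> qT (Inv N) \<noteq> 0 \<and> qS (T (Inv N)) \<noteq> 0 \<and> S (T (Inv N)) = Inv N"
    then have "\<Phi> (pencil_inverse_map a b T N) = N"
      unfolding pencil_inverse_map_def
      by (intro Phi_pencil_inverse[OF pf]) (use N in \<open>simp_all add: D pencil_inverse_map_def\<close>)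
    with N show "D N \<noteq> 0 \<and> q (pencil_inverse_map a b T N) \<noteq> 0 \<and>
        \<Phi> (pencil_inverse_map a b T N) = N" by simp
  qed
qed

lemma birational_Phi_if_birational_S:
  assumes "birational vec_coords vec_coords S qS"
  shows "birational mat_coords mat_coords \<Phi> q"
proof -
  obtain T qT where T: "rational_map vec_coords vec_coords T qT"
    and left: "generically vec_coords (\<lambda>x. qS x \<noteq> 0 \<and> qT (S x) \<noteq> 0 \<and> T (S x) = x)"
    and right: "generically vec_coords (\<lambda>y. qT y \<noteq> 0 \<and> qS (T y) \<noteq> 0 \<and> S (T y) = y)"
    using assms unfolding birational_def by blast
  have dom_S: "dominant vec_coords vec_coords qS S"
    by (rule dominant_if_right_inverse[OF affine_lines_vec qS(2,1), where g=T],
        rule generically_mono[OF right]) simp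
  obtain E a b where pf: "pencil_form q \<Phi> E a b"
    by (rule compatible_with_conjugation_pencil_form[OF Phi_rational Phi_compatible])
  note E = pencil_formD[OF pf]
  obtain y0 where "E y0 \<noteq> 0" "b y0 \<noteq> 0" by (rule pencil_form_coeff_nonzero[OF pf dom_S])
  let ?\<Psi> = "pencil_inverse_map a b T"
  obtain D where D: "polyfun mat_coords D"
    "\<And>N. D N \<noteq> 0 \<longleftrightarrow> qT (Inv N) \<noteq> 0 \<and> E (T (Inv N)) \<noteq> 0 \<and> b (T (Inv N)) \<noteq> 0"
    "rat_map mat_coords mat_coords D ?\<Psi>"
    by (rule rat_map_pencil_inverse[OF polyfun_compose[OF polymap_Inv rational_mapD(2)[OF T]]
          rat_map_precompose_polymap[OF polymap_Inv rational_mapD(1)[OF T]] E(1-3)])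
      (rule that[unfolded pencil_inverse_map_def])
  have \<Psi>_\<Phi>: "generically mat_coords (\<lambda>M. q M \<noteq> 0 \<and> D (\<Phi> M) \<noteq> 0 \<and> ?\<Psi> (\<Phi> M) = M)"
    by (rule pencil_inverse_map_Phi[OF pf generically_rat_fun_nonzero[OF E(1,3) \<open>E y0 \<noteq> 0\<close> \<open>b y0 \<noteq> 0\<close>] left D(2)])
  then obtain M1 where M1: "q M1 \<noteq> 0" "D (\<Phi> M1) \<noteq> 0" "?\<Psi> (\<Phi> M1) = M1"
    using generically_ex by blast
  have "generically mat_coords (\<lambda>N. D N \<noteq> 0 \<and> q (?\<Psi> N) \<noteq> 0)"
    using generically_rat_fun_nonzero[OF D(1) rat_fun_compose_polyfun[OF D(1,3) q(2)], of "\<Phi> M1"] M1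
    by simp
  then have \<Phi>_\<Psi>: "generically mat_coords (\<lambda>N. D N \<noteq> 0 \<and> q (?\<Psi> N) \<noteq> 0 \<and> \<Phi> (?\<Psi> N) = N)"
    by (rule Phi_pencil_inverse_map[OF pf right D(2)])
  obtain n where "rational_map mat_coords mat_coords ?\<Psi> (\<lambda>N. D N ^ n)"
    by (rule rational_map_if_rat_map[OF finite_mat_coords D(1) M1(2) D(3)])
  then show ?thesis unfolding birational_def
  proof (intro exI[of _ ?\<Psi>] exI[of _ "\<lambda>N. D N ^ n"] conjI)
    show "generically mat_coords (\<lambda>M. q M \<noteq> 0 \<and> D (\<Phi> M) ^ n \<noteq> 0 \<and> ?\<Psi> (\<Phi> M) = M)"
      by (rule generically_mono[OF \<Psi>_\<Phi>]) simp
    show "generically mat_coords (\<lambda>N. D N ^ n \<noteq> 0 \<and> q (?\<Psi> N) \<noteq> 0 \<and> \<Phi> (?\<Psi> N) = N)"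
      by (rule generically_mono[OF \<Phi>_\<Psi>]) simp
  qed
qed

end

theorem proposition2p27:
  fixes \<Phi> :: "complex^2^2 \<Rightarrow> complex^2^2" and q :: "complex^2^2 \<Rightarrow> complex"
    and S :: "complex^2 \<Rightarrow> complex^2" and qS :: "complex^2 \<Rightarrow> complex"
  assumes "rational_map mat_coords mat_coords \<Phi> q"
    and "compatible_with_conjugation \<Phi>"
    and "rational_map vec_coords vec_coords S qS"
    and "generically mat_coords (\<lambda>M. q M \<noteq> 0 \<and> qS (Inv M) \<noteq> 0 \<and> Inv (\<Phi> M) = S (Inv M))"
  shows "birational mat_coords mat_coords \<Phi> q \<longleftrightarrow> birational vec_coords vec_coords S qS"
proof -
  interpret Sq_of \<Phi> q S qS by unfold_locales (fact assms)+
  show ?thesis using birational_S_if_birational_Phi birational_Phi_if_birational_S by blast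
qed

end
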